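(* Let $\mathcal{A}$ be a Boolean algebra, let $(Z_n)_{n\in\omega}$ be a proper $\mathcal{R}$-filtration of $\mathcal{A}$, and let $f:\mathcal{A}\to\omega$ be given by $f(x) = \min\{n : x \in Z_n\}$. Then there exists a sequence $(a_n)_{n\in\omega}$ in $\mathcal{A}$ such that $a_n \wedge a_m = 0$ whenever $m \neq n$ and $f(a_0) < f(a_1) < f(a_2) < \cdots$.
   Context: For a subset $Z$ of a Boolean algebra, $\mathcal{R}(Z) = Z \cup \{0,1\} \cup \{x^c : x \in Z\} \cup \{x\vee y : x,y\in Z\} \cup \{x\wedge y : x,y \in Z\} \cup \{x \wedge y^c : x,y\in Z\}$. A proper $\mathcal{R}$-filtration of a Boolean algebra $\mathcal{A}$ is a sequence $(Z_n)_{n\in\omega}$ of subsets with $Z_n \subsetneq Z_{n+1}$, $\mathcal{R}(Z_n)\subseteq Z_{n+1}$, and $\bigcup_n Z_n = \mathcal{A}$. *)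

theory Defs
  imports Main
begin

definition R_op :: "'a::boolean_algebra set \<Rightarrow> 'a set" where
  "R_op Z = Z \<union> {bot, top} \<union> {- x | x. x \<in> Z}
     \<union> {sup x y | x y. x \<in> Z \<and> y \<in> Z}
     \<union> {inf x y | x y. x \<in> Z \<and> y \<in> Z}
     \<union> {inf x (- y) | x y. x \<in> Z \<and> y \<in> Z}"

text \<open>A proper R-filtration of the whole Boolean algebra (the type 'a).\<close>
definition proper_R_filtration :: "(nat \<Rightarrow> 'a::boolean_algebra set) \<Rightarrow> bool" where
  "proper_R_filtration Z \<longleftrightarrow>
     (\<forall>n. Z n \<subset> Z (Suc n)) \<and> (\<forall>n. R_op (Z n) \<subseteq> Z (Suc n)) \<and> (\<Union>n. Z n) = UNIV"

end

theory Submission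
  imports Defs
begin

text \<open>Write rank x for the least n with x \<in> Z n. Since Z (n+1) contains R(Z n), the ranks of
  x \<sqinter> -y and x \<squnion> y exceed max (rank x) (rank y) by at most one, and properness makes the rank
  unbounded; nothing else is used. Call b unbounded below if the rank is unbounded on the elements
  below b, as it is for top. Given such b and a bound K, pick x \<le> b with rank x > max K (rank b) + 1.
  As x = b \<sqinter> -(b \<sqinter> -x), the complement c = b \<sqinter> -x of x in b has rank above K; and as every
  y \<le> b is the join of y \<sqinter> x and y \<sqinter> -x, one of x and c is again unbounded below. So b splits
  into two disjoint parts, one of rank above K and one unbounded below. Splitting again inside
  the unbounded part, with K the rank of the previous piece, produces the sequence.\<close>

locale rank_function =
  fixes rank :: "'a::boolean_algebra \<Rightarrow> nat"
  assumes rank_diff_le: "rank (inf x (- y)) \<le> max (rank x) (rank y) + 1"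
    and rank_sup_le: "rank (sup x y) \<le> max (rank x) (rank y) + 1"
    and rank_unbounded: "\<exists>x. K < rank x"
begin

definition unbounded_below :: "'a \<Rightarrow> bool" where
  "unbounded_below b \<longleftrightarrow> (\<forall>K. \<exists>y \<le> b. K < rank y)"

lemma unbounded_below_top: "unbounded_below top"
  using rank_unbounded by (simp add: unbounded_below_def)

lemma unbounded_below_split:
  assumes "unbounded_below b"
  shows "unbounded_below (inf b x) \<or> unbounded_below (inf b (- x))"
proof (rule ccontr)
  assume "\<not> ?thesis"
  then obtain L1 L2 where
    L1: "\<And>y. y \<le> inf b x \<Longrightarrow> rank y \<le> L1" and
    L2: "\<And>y. y \<le> inf b (- x) \<Longrightarrow> rank y \<le> L2"
    by (auto simp: unbounded_below_def not_less)
  obtain y where "y \<le> b" and y_rank: "max L1 L2 + 1 < rank y"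
    using assms unfolding unbounded_below_def by blast
  have "y = sup (inf y x) (inf y (- x))"
    by (simp flip: inf_sup_distrib1)
  then have "rank y \<le> max (rank (inf y x)) (rank (inf y (- x))) + 1"
    by (metis rank_sup_le)
  moreover have "rank (inf y x) \<le> L1" and "rank (inf y (- x)) \<le> L2"
    using L1[OF inf_mono] L2[OF inf_mono] \<open>y \<le> b\<close> by blast+
  ultimately show False
    using y_rank by linarith
qed

lemma unbounded_below_split_off:
  assumes "unbounded_below b"
  obtains a c where "a \<le> b" "c \<le> b" "inf a c = bot" "K < rank a" "unbounded_below c"
proof -
  obtain x where "x \<le> b" and x_rank: "max K (rank b) + 1 < rank x"
    using assms unfolding unbounded_below_def by blast
  define c where "c = inf b (- x)"
  have "inf b (- c) = x"
    using \<open>x \<le> b\<close> by (simp add: c_def inf_sup_distrib1 inf.absorb2)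
  then have "rank x \<le> max (rank b) (rank c) + 1"
    by (metis rank_diff_le)
  then have "K < rank c"
    using x_rank by linarith
  have "c \<le> b" and "inf x c = bot"
    by (auto simp: c_def inf_left_commute)
  moreover have "unbounded_below x \<or> unbounded_below c"
    using unbounded_below_split[OF assms, of x] \<open>x \<le> b\<close> by (simp add: c_def inf.absorb2)
  moreover have "K < rank x"
    using x_rank by linarith
  ultimately show thesis
    using that[of c x] that[of x c] \<open>x \<le> b\<close> \<open>K < rank c\<close> by (auto simp: inf_commute)
qed

lemma disjoint_sequence_increasing_rank:
  "\<exists>a :: nat \<Rightarrow> 'a. (\<forall>m n. m \<noteq> n \<longrightarrow> inf (a n) (a m) = bot)
      \<and> (\<forall>n. rank (a n) < rank (a (Suc n)))"
proof -
  have "\<forall>p. \<exists>q. unbounded_below (snd p) \<longrightarrow>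
      fst q \<le> snd p \<and> snd q \<le> snd p \<and> inf (fst q) (snd q) = bot
      \<and> rank (fst p) < rank (fst q) \<and> unbounded_below (snd q)"
    by (metis unbounded_below_split_off fst_conv snd_conv)
  then obtain step where step:
    "\<And>p. unbounded_below (snd p) \<Longrightarrow>
      fst (step p) \<le> snd p \<and> snd (step p) \<le> snd p \<and> inf (fst (step p)) (snd (step p)) = bot
      \<and> rank (fst p) < rank (fst (step p)) \<and> unbounded_below (snd (step p))"
    by metis
  \<comment> \<open>s n = (a n, c n): the n-th piece and the remainder, unbounded below, inside which all later pieces lie\<close>
  define s where "s n = (step ^^ n) (bot, top)" for n
  have s_Suc: "s (Suc n) = step (s n)" for n
    by (simp add: s_def)
  have s_inv: "unbounded_below (snd (s n)) \<and> inf (fst (s n)) (snd (s n)) = bot" for n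
    by (induction n) (simp_all add: s_def unbounded_below_top step)
  note s_step = step[OF s_inv[THEN conjunct1], folded s_Suc]
  have snd_antimono: "m \<le> n \<Longrightarrow> snd (s n) \<le> snd (s m)" for m n
    by (induction n rule: dec_induct) (use s_step order_trans in blast)+
  have disjoint: "inf (fst (s m)) (fst (s n)) = bot" if "m < n" for m n
  proof -
    obtain k where "n = Suc k" "m \<le> k"
      using \<open>m < n\<close> by (cases n) auto
    then have "fst (s n) \<le> snd (s m)"
      using s_step[of k] snd_antimono by (metis order_trans)
    then show ?thesis
      using s_inv[of m] by (metis inf_mono order_refl bot_unique)
  qed
  show ?thesis
  proof (intro exI[of _ "\<lambda>n. fst (s n)"] conjI allI impI)
    fix m n :: nat
    assume "m \<noteq> n"
    then show "inf (fst (s n)) (fst (s m)) = bot"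
      using disjoint by (metis inf_commute linorder_neqE_nat)
  qed (use s_step in blast)
qed

end

definition filtration_rank :: "(nat \<Rightarrow> 'a set) \<Rightarrow> 'a \<Rightarrow> nat" where
  "filtration_rank Z x = (LEAST n. x \<in> Z n)"

lemma in_filtration_rank: "(\<Union>n. Z n) = UNIV \<Longrightarrow> x \<in> Z (filtration_rank Z x)"
  unfolding filtration_rank_def by (rule LeastI_ex) blast

lemma filtration_rank_le: "x \<in> Z n \<Longrightarrow> filtration_rank Z x \<le> n"
  unfolding filtration_rank_def by (rule Least_le)

lemma proper_R_filtration_mono: "proper_R_filtration Z \<Longrightarrow> mono Z"
  by (auto simp: proper_R_filtration_def mono_iff_le_Suc)

lemma proper_R_filtration_mem_iff:
  assumes Z: "proper_R_filtration Z"
  shows "x \<in> Z n \<longleftrightarrow> filtration_rank Z x \<le> n"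
proof
  assume "filtration_rank Z x \<le> n"
  then show "x \<in> Z n"
    using in_filtration_rank[of Z x] proper_R_filtration_mono[OF Z] Z
    by (auto simp: proper_R_filtration_def dest: monoD)
qed (rule filtration_rank_le)

lemma proper_R_filtration_rank_function:
  assumes Z: "proper_R_filtration Z"
  shows "rank_function (filtration_rank Z)"
proof
  fix x y :: 'a
  define m where "m = max (filtration_rank Z x) (filtration_rank Z y)"
  have "x \<in> Z m" "y \<in> Z m"
    by (simp_all add: proper_R_filtration_mem_iff[OF Z] m_def)
  then have "inf x (- y) \<in> R_op (Z m)" "sup x y \<in> R_op (Z m)"
    unfolding R_op_def by blast+
  then have "inf x (- y) \<in> Z (Suc m)" "sup x y \<in> Z (Suc m)"
    using Z by (auto simp: proper_R_filtration_def)
  then show "filtration_rank Z (inf x (- y)) \<le> m + 1" "filtration_rank Z (sup x y) \<le> m + 1"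
    by (simp_all add: proper_R_filtration_mem_iff[OF Z])
next
  fix K
  have "Z K \<subset> Z (Suc K)"
    using Z by (simp add: proper_R_filtration_def)
  then obtain x where "x \<in> Z (Suc K)" "x \<notin> Z K"
    by blast
  then have "K < filtration_rank Z x"
    by (simp add: proper_R_filtration_mem_iff[OF Z])
  then show "\<exists>x. K < filtration_rank Z x" ..
qed

theorem lemma3p7:
  fixes Z :: "nat \<Rightarrow> 'a::boolean_algebra set"
    and f :: "'a \<Rightarrow> nat"
  assumes "proper_R_filtration Z"
    and "\<And>x. f x = (LEAST n. x \<in> Z n)"
  shows "\<exists>a :: nat \<Rightarrow> 'a. (\<forall>m n. m \<noteq> n \<longrightarrow> inf (a n) (a m) = bot)
           \<and> (\<forall>n. f (a n) < f (a (Suc n)))"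
proof -
  have "f = filtration_rank Z"
    using assms(2) by (simp add: fun_eq_iff filtration_rank_def)
  then interpret rank_function f
    using proper_R_filtration_rank_function[OF assms(1)] by simp
  show ?thesis
    by (rule disjoint_sequence_increasing_rank)
qed

end
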